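(* Let $M$ be a unique expansion matroid on a finite set $E$ with $r(M)>0$, and let $B\subseteq E$. Then $B\in\mathcal{B}(M)$ if and only if $B\subseteq\cup\mathcal{B}(M)$ and $|B\cap D|=1$ for every $D\in F(M)$.
   Context: For a matroid $M$: $\mathcal{I}(M)$ its independent sets, $\mathcal{B}(M)$ its bases, $\cup\mathcal{B}(M)$ the union of all bases, $r(M)$ the size of a base, $r(X)$ the rank of $X\subseteq E$. $s(M)=\{A\in\mathcal{I}(M): |A|=r(M)-1\}$; $K_M(X)=\{a\in E: r(X\cup\{a\})=r(X)+1\}$; $F(M)=\{K_M(X): X\in s(M)\}$. $M$ is a unique expansion matroid if for every $B\in\mathcal{B}(M)$ and every $A\in s(M)$, whenever $e_1,e_2\in B$ satisfy $A\cup\{e_1\}\in\mathcal{B}(M)$ and $A\cup\{e_2\}\in\mathcal{B}(M)$, then $e_1=e_2$. *)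

theory Defs
  imports Main
begin

definition matroid :: "'a set \<Rightarrow> 'a set set \<Rightarrow> bool" where
  "matroid E \<I> \<longleftrightarrow> finite E \<and> (\<forall>A\<in>\<I>. A \<subseteq> E) \<and> {} \<in> \<I> \<and>
     (\<forall>A B. A \<in> \<I> \<and> B \<subseteq> A \<longrightarrow> B \<in> \<I>) \<and>
     (\<forall>A B. A \<in> \<I> \<and> B \<in> \<I> \<and> card A < card B \<longrightarrow> (\<exists>e\<in>B - A. insert e A \<in> \<I>))"

definition mrank :: "'a set set \<Rightarrow> 'a set \<Rightarrow> nat" where
  "mrank \<I> X = Max (card ` {A. A \<in> \<I> \<and> A \<subseteq> X})"

definition bases :: "'a set set \<Rightarrow> 'a set set" where
  "bases \<I> = {B. B \<in> \<I> \<and> (\<forall>A\<in>\<I>. B \<subseteq> A \<longrightarrow> A = B)}"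

definition matroid_rank :: "'a set \<Rightarrow> 'a set set \<Rightarrow> nat" where
  "matroid_rank E \<I> = mrank \<I> E"

definition s_sets :: "'a set \<Rightarrow> 'a set set \<Rightarrow> 'a set set" where
  "s_sets E \<I> = {A. A \<in> \<I> \<and> card A = matroid_rank E \<I> - 1}"

definition K_M :: "'a set \<Rightarrow> 'a set set \<Rightarrow> 'a set \<Rightarrow> 'a set" where
  "K_M E \<I> X = {a\<in>E. mrank \<I> (insert a X) = mrank \<I> X + 1}"

definition F_M :: "'a set \<Rightarrow> 'a set set \<Rightarrow> 'a set set" where
  "F_M E \<I> = K_M E \<I> ` s_sets E \<I>"

definition unique_expansion :: "'a set \<Rightarrow> 'a set set \<Rightarrow> bool" where
  "unique_expansion E \<I> \<longleftrightarrow>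
     (\<forall>B\<in>bases \<I>. \<forall>A\<in>s_sets E \<I>. \<forall>e1\<in>B. \<forall>e2\<in>B.
        insert e1 A \<in> bases \<I> \<and> insert e2 A \<in> bases \<I> \<longrightarrow> e1 = e2)"

end

theory Submission
  imports Defs
begin

text \<open>For an (r-1)-element independent set X, the set K_M X consists exactly of the elements
  completing X to a base. A base B therefore meets K_M X in the elements e of B with
  X + e a base: by augmentation there is at least one, and by unique expansion at most one.
  Conversely, let B meet every K_M X exactly once and take a maximal independent I \<subseteq> B.
  If I is not spanning, extend it to some X of size r-1 and B misses K_M X. If I is a base
  but some z \<in> B - I remains, z is not a loop because it lies in a base, so base exchange
  gives i \<in> I with I - i + z a base, and both i and z lie in B \<inter> K_M (I - i).\<close>

locale matroid_on =
  fixes E :: "'a set" and Ind :: "'a set set"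
  assumes matroid: "matroid E Ind"
begin

lemma finite_ground: "finite E"
  using matroid unfolding matroid_def by blast

lemma indep_subset_ground: "A \<in> Ind \<Longrightarrow> A \<subseteq> E"
  using matroid unfolding matroid_def by blast

lemma finite_indep: "A \<in> Ind \<Longrightarrow> finite A"
  using finite_ground indep_subset_ground finite_subset by blast

lemma empty_indep: "{} \<in> Ind"
  using matroid unfolding matroid_def by blast

lemma indep_subset: "A \<in> Ind \<Longrightarrow> B \<subseteq> A \<Longrightarrow> B \<in> Ind"
  using matroid unfolding matroid_def by blast

lemma indep_augment:
  "A \<in> Ind \<Longrightarrow> B \<in> Ind \<Longrightarrow> card A < card B \<Longrightarrow> \<exists>e\<in>B - A. insert e A \<in> Ind"
  using matroid unfolding matroid_def by blast

lemma indep_extend: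
  assumes J: "J \<in> Ind"
  shows "I \<in> Ind \<Longrightarrow> card I \<le> card J \<Longrightarrow>
    \<exists>K\<in>Ind. I \<subseteq> K \<and> K \<subseteq> I \<union> J \<and> card K = card J"
proof (induction "card J - card I" arbitrary: I)
  case 0
  then show ?case by auto
next
  case (Suc n)
  then have "card I < card J" by simp
  with indep_augment[OF Suc.prems(1) J]
  obtain e where e: "e \<in> J - I" "insert e I \<in> Ind" by blast
  have "card (insert e I) = Suc (card I)"
    using e finite_indep[OF Suc.prems(1)] by simp
  with Suc.hyps(2) \<open>card I < card J\<close>
  have "n = card J - card (insert e I)" "card (insert e I) \<le> card J" by simp_all
  then obtain K where "K \<in> Ind" "insert e I \<subseteq> K" "K \<subseteq> insert e I \<union> J" "card K = card J"
    using Suc.hyps(1) e(2) by blast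
  then show ?case using e by blast
qed

lemma finite_card_indep_subsets: "finite Y \<Longrightarrow> finite (card ` {A \<in> Ind. A \<subseteq> Y})"
  by (auto intro: finite_imageI rev_finite_subset[of "Pow Y"])

lemma mrank_attained:
  assumes "finite Y"
  shows "\<exists>A\<in>Ind. A \<subseteq> Y \<and> card A = mrank Ind Y"
proof -
  have "card ` {A \<in> Ind. A \<subseteq> Y} \<noteq> {}" using empty_indep by blast
  from Max_in[OF finite_card_indep_subsets[OF assms] this]
  obtain A where "A \<in> Ind" "A \<subseteq> Y" "card A = mrank Ind Y"
    unfolding mrank_def by auto
  then show ?thesis by blast
qed

lemma card_le_mrank: "finite Y \<Longrightarrow> A \<in> Ind \<Longrightarrow> A \<subseteq> Y \<Longrightarrow> card A \<le> mrank Ind Y"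
  unfolding mrank_def by (rule Max_ge[OF finite_card_indep_subsets]) auto

lemma mrank_le_card: "finite Y \<Longrightarrow> mrank Ind Y \<le> card Y"
  by (metis mrank_attained card_mono)

lemma mrank_indep: "Y \<in> Ind \<Longrightarrow> mrank Ind Y = card Y"
  by (meson antisym card_le_mrank finite_indep mrank_le_card order_refl)

lemma indep_if_mrank_eq_card: "finite Y \<Longrightarrow> mrank Ind Y = card Y \<Longrightarrow> Y \<in> Ind"
  by (metis mrank_attained card_subset_eq)

lemma K_M_iff:
  assumes X: "X \<in> Ind"
  shows "a \<in> K_M E Ind X \<longleftrightarrow> a \<in> E \<and> a \<notin> X \<and> insert a X \<in> Ind"
proof -
  have fX: "finite X" using finite_indep[OF X] .
  have "mrank Ind (insert a X) = card X + 1 \<longleftrightarrow> a \<notin> X \<and> insert a X \<in> Ind"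
  proof
    assume rk: "mrank Ind (insert a X) = card X + 1"
    then have "a \<notin> X" using mrank_indep[OF X] by (auto simp: insert_absorb)
    with rk show "a \<notin> X \<and> insert a X \<in> Ind"
      using fX indep_if_mrank_eq_card[of "insert a X"] by simp
  qed (use fX mrank_indep in simp)
  then show ?thesis unfolding K_M_def mrank_indep[OF X] by auto
qed

lemma exists_indep_card_rank: "\<exists>A\<in>Ind. card A = matroid_rank E Ind"
  using mrank_attained[OF finite_ground] unfolding matroid_rank_def by blast

lemma card_indep_le_rank: "A \<in> Ind \<Longrightarrow> card A \<le> matroid_rank E Ind"
  unfolding matroid_rank_def by (simp add: card_le_mrank finite_ground indep_subset_ground)

lemma bases_iff: "B \<in> bases Ind \<longleftrightarrow> B \<in> Ind \<and> card B = matroid_rank E Ind"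
proof
  assume B: "B \<in> bases Ind"
  then have BI: "B \<in> Ind" unfolding bases_def by simp
  obtain A where A: "A \<in> Ind" "card A = matroid_rank E Ind"
    using exists_indep_card_rank by blast
  have "\<not> card B < card A"
    using indep_augment[OF BI A(1)] B unfolding bases_def by blast
  then show "B \<in> Ind \<and> card B = matroid_rank E Ind"
    using A BI card_indep_le_rank[OF BI] by simp
next
  assume B: "B \<in> Ind \<and> card B = matroid_rank E Ind"
  have "A = B" if "A \<in> Ind" "B \<subseteq> A" for A
    using card_seteq[OF finite_indep[OF that(1)] that(2)] B card_indep_le_rank[OF that(1)] by auto
  then show "B \<in> bases Ind" using B unfolding bases_def by blast
qed

lemma K_M_s_sets_iff:
  assumes X: "X \<in> s_sets E Ind" and r: "matroid_rank E Ind > 0"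
  shows "a \<in> K_M E Ind X \<longleftrightarrow> a \<in> E \<and> insert a X \<in> bases Ind"
proof -
  have XI: "X \<in> Ind" and cX: "card X = matroid_rank E Ind - 1"
    using X unfolding s_sets_def by auto
  have "a \<notin> X \<and> insert a X \<in> Ind \<longleftrightarrow> insert a X \<in> bases Ind"
    using r cX finite_indep[OF XI] by (auto simp: bases_iff insert_absorb)
  then show ?thesis using K_M_iff[OF XI] by blast
qed

lemma indep_subset_s_set:
  assumes I: "I \<in> Ind" and "card I < matroid_rank E Ind"
  shows "\<exists>X\<in>s_sets E Ind. I \<subseteq> X"
proof -
  obtain A where A: "A \<in> Ind" "card A = matroid_rank E Ind"
    using exists_indep_card_rank by blast
  obtain K where K: "K \<in> Ind" "I \<subseteq> K" "card K = matroid_rank E Ind"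
    using indep_extend[OF A(1) I] assms A by auto
  moreover have "K \<noteq> I" using K(3) assms(2) by auto
  ultimately obtain b where b: "b \<in> K - I" by blast
  have "K - {b} \<in> Ind" using indep_subset[OF K(1)] by blast
  moreover have "card (K - {b}) = matroid_rank E Ind - 1"
    using K(3) b finite_indep[OF K(1)] by simp
  ultimately have "K - {b} \<in> s_sets E Ind" unfolding s_sets_def by simp
  moreover have "I \<subseteq> K - {b}" using K(2) b by blast
  ultimately show ?thesis by blast
qed

lemma basis_exchange:
  assumes I: "I \<in> bases Ind" and z: "{z} \<in> Ind" "z \<notin> I"
  shows "\<exists>i\<in>I. insert z (I - {i}) \<in> bases Ind"
proof -
  have II: "I \<in> Ind" and cI: "card I = matroid_rank E Ind"
    using I bases_iff by auto
  have "card {z} \<le> card I"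
    using card_indep_le_rank[OF z(1)] cI by simp
  then obtain K where K: "K \<in> Ind" "z \<in> K" "K \<subseteq> insert z I" "card K = card I"
    using indep_extend[OF II z(1)] by auto
  have "\<not> I \<subseteq> K"
  proof
    assume "I \<subseteq> K"
    then have "card (insert z I) \<le> card K"
      using K(1,2) finite_indep card_mono by (metis insert_subset)
    then show False using K(4) z(2) finite_indep[OF II] by simp
  qed
  then obtain i where i: "i \<in> I" "i \<notin> K" by blast
  have "card I > 0" using i(1) finite_indep[OF II] card_gt_0_iff by blast
  then have "K = insert z (I - {i})"
    using K i z(2) finite_indep[OF II] by (intro card_subset_eq) (auto simp: card_Diff_singleton)
  then show ?thesis using K cI i bases_iff by auto
qed

lemma exists_maximal_indep_subset:
  assumes "finite B"
  shows "\<exists>I\<in>Ind. I \<subseteq> B \<and> (\<forall>z\<in>B - I. insert z I \<notin> Ind)"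
proof -
  have "finite {A \<in> Ind. A \<subseteq> B}" using assms by (auto intro: rev_finite_subset[of "Pow B"])
  moreover have "{A \<in> Ind. A \<subseteq> B} \<noteq> {}" using empty_indep by blast
  ultimately obtain I where I: "I \<in> {A \<in> Ind. A \<subseteq> B}"
    and maximal: "\<forall>A\<in>{A \<in> Ind. A \<subseteq> B}. I \<subseteq> A \<longrightarrow> I = A"
    using finite_has_maximal[of "{A \<in> Ind. A \<subseteq> B}"] by blast
  have "insert z I \<notin> Ind" if z: "z \<in> B - I" for z
  proof
    assume "insert z I \<in> Ind"
    with I z maximal have "I = insert z I" by blast
    with z show False by blast
  qed
  with I show ?thesis by blast
qed

lemma s_set_missing_if_not_spanning:
  assumes I: "I \<in> Ind" "I \<subseteq> B" and maximal: "\<forall>z\<in>B - I. insert z I \<notin> Ind"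
    and "card I < matroid_rank E Ind"
  shows "\<exists>X\<in>s_sets E Ind. B \<inter> K_M E Ind X = {}"
proof -
  obtain X where X: "X \<in> s_sets E Ind" "I \<subseteq> X"
    using indep_subset_s_set[OF I(1) assms(4)] by blast
  have XI: "X \<in> Ind" using X(1) unfolding s_sets_def by simp
  have "z \<notin> K_M E Ind X" if "z \<in> B" for z
  proof
    assume "z \<in> K_M E Ind X"
    then have "z \<notin> X" "insert z X \<in> Ind" using K_M_iff[OF XI] by auto
    then have "z \<notin> I" "insert z I \<in> Ind" using X(2) indep_subset[of "insert z X" "insert z I"] by auto
    with maximal \<open>z \<in> B\<close> show False by blast
  qed
  with X(1) show ?thesis by blast
qed

lemma card_basis_inter_F_M:
  assumes ue: "unique_expansion E Ind" and r: "matroid_rank E Ind > 0"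
    and B: "B \<in> bases Ind" and D: "D \<in> F_M E Ind"
  shows "card (B \<inter> D) = 1"
proof -
  obtain X where X: "X \<in> s_sets E Ind" and D_eq: "D = K_M E Ind X"
    using D unfolding F_M_def by blast
  have XI: "X \<in> Ind" and cX: "card X = matroid_rank E Ind - 1"
    using X unfolding s_sets_def by auto
  have BI: "B \<in> Ind" and cB: "card B = matroid_rank E Ind"
    using B bases_iff by auto
  obtain K where K: "K \<in> Ind" "X \<subseteq> K" "K \<subseteq> X \<union> B" "card K = matroid_rank E Ind"
    using indep_extend[OF BI XI] cX cB by auto
  moreover have "K \<noteq> X" using K(4) cX r by auto
  ultimately obtain e where e: "e \<in> K - X" by blast
  have "insert e X = K"
    using K e r cX finite_indep[OF K(1)] finite_indep[OF XI] by (intro card_subset_eq) auto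
  then have "e \<in> B \<inter> D"
    using K e B D_eq K_M_s_sets_iff[OF X r] indep_subset_ground[OF BI] bases_iff by auto
  moreover have "y = e" if "y \<in> B \<inter> D" for y
    using ue that \<open>e \<in> B \<inter> D\<close> B X K_M_s_sets_iff[OF X r]
    unfolding D_eq unique_expansion_def by blast
  ultimately have "B \<inter> D = {e}" by blast
  then show ?thesis by simp
qed

lemma basis_if_card_inter_F_M:
  assumes r: "matroid_rank E Ind > 0" and BE: "B \<subseteq> E"
    and cover: "B \<subseteq> \<Union>(bases Ind)" and meets: "\<forall>D\<in>F_M E Ind. card (B \<inter> D) = 1"
  shows "B \<in> bases Ind"
proof -
  have fB: "finite B" using BE finite_ground finite_subset by blast
  have one: "card (B \<inter> K_M E Ind X) = 1" if "X \<in> s_sets E Ind" for X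
    using meets that unfolding F_M_def by blast
  obtain I where I: "I \<in> Ind" "I \<subseteq> B" and maximal: "\<forall>z\<in>B - I. insert z I \<notin> Ind"
    using exists_maximal_indep_subset[OF fB] by blast
  have "\<not> card I < matroid_rank E Ind"
    using s_set_missing_if_not_spanning[OF I maximal] one by fastforce
  then have I_basis: "I \<in> bases Ind"
    using I(1) card_indep_le_rank[OF I(1)] bases_iff by simp
  have "I = B"
  proof (rule ccontr)
    assume "I \<noteq> B"
    then obtain z where z: "z \<in> B" "z \<notin> I" using I(2) by blast
    obtain B' where "B' \<in> bases Ind" "z \<in> B'" using z(1) cover by blast
    then have "{z} \<in> Ind" using bases_iff indep_subset[of B' "{z}"] by simp
    then obtain i where i: "i \<in> I" "insert z (I - {i}) \<in> bases Ind"
      using basis_exchange[OF I_basis _ z(2)] by blast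
    define X where "X = I - {i}"
    have X: "X \<in> s_sets E Ind"
      using I_basis i finite_indep indep_subset unfolding X_def s_sets_def bases_iff
      by (auto simp: card_Diff_singleton)
    have "insert i X = I" using i unfolding X_def by blast
    then have "{i, z} \<subseteq> B \<inter> K_M E Ind X"
      using i z I I_basis BE K_M_s_sets_iff[OF X r] unfolding X_def by auto
    then have "card {i, z} \<le> 1" using card_mono[of "B \<inter> K_M E Ind X"] fB one[OF X] by simp
    moreover have "i \<noteq> z" using i z by blast
    ultimately show False by simp
  qed
  then show ?thesis using I_basis by simp
qed

end

theorem proposition7:
  fixes E :: "'a set" and \<I> :: "'a set set" and B :: "'a set"
  assumes "matroid E \<I>"
    and "unique_expansion E \<I>"
    and "matroid_rank E \<I> > 0"
    and "B \<subseteq> E"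
  shows "B \<in> bases \<I> \<longleftrightarrow>
           (B \<subseteq> \<Union>(bases \<I>) \<and> (\<forall>D\<in>F_M E \<I>. card (B \<inter> D) = 1))"
proof -
  interpret matroid_on E \<I> by (rule matroid_on.intro) (fact assms(1))
  show ?thesis
    using card_basis_inter_F_M[OF assms(2,3)] basis_if_card_inter_F_M[OF assms(3,4)] by blast
qed

end
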